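(* Let $X$ be a periodic semigroup, $e\in E(X)$, and for $n\in\mathbb N$ let $Z_n=\{z\in Z(X): z^n\in H_e\}$. If for some $\ell\in\mathbb N$ the set $Z_\ell\setminus H_e$ is infinite, then there exist a finite set $F\subseteq Z_\ell$ and an infinite set $A\subseteq Z_\ell\setminus FX^1$ such that $AA\subseteq F\cup H_e\subseteq FX^1$.
   Context: Periodic: every element has an idempotent power. $E(X)$: idempotents; $H_e$: maximal subgroup containing $e$; $Z(X)$: center. $X^1=X\cup\{1\}$ with adjoined identity, $FX^1=\{fx:f\in F,x\in X^1\}$, $AA=\{ab:a,b\in A\}$. *)

theory Defs
  imports Main
begin

text \<open>Semigroups are modelled by the type class semigroup_mult; X is the whole type.\<close>

text \<open>Positive powers in a semigroup: spow x n = x^n for n \<ge> 1 (spow x 0 = x is a dummy value).\<close>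
fun spow :: "'a::semigroup_mult \<Rightarrow> nat \<Rightarrow> 'a" where
  "spow x 0 = x"
| "spow x (Suc 0) = x"
| "spow x (Suc (Suc n)) = spow x (Suc n) * x"

definition idems :: "'a::semigroup_mult set" where
  "idems = {e. e * e = e}"

definition periodic_sg :: "'a::semigroup_mult itself \<Rightarrow> bool" where
  "periodic_sg _ \<longleftrightarrow> (\<forall>x::'a. \<exists>n\<ge>1. spow x n \<in> idems)"

definition center :: "'a::semigroup_mult set" where
  "center = {z. \<forall>x. z * x = x * z}"

text \<open>Maximal subgroup containing the idempotent e (the H-class of e).\<close>
definition maxgrp :: "'a::semigroup_mult \<Rightarrow> 'a set" where
  "maxgrp e = {x. e * x = x \<and> x * e = x \<and>
       (\<exists>y. e * y = y \<and> y * e = y \<and> x * y = e \<and> y * x = e)}"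

text \<open>F X^1 = F \<union> F X.\<close>
definition ideal1 :: "'a::semigroup_mult set \<Rightarrow> 'a set" where
  "ideal1 F = F \<union> {f * x | f x. f \<in> F}"

definition setprod :: "'a::semigroup_mult set \<Rightarrow> 'a set \<Rightarrow> 'a set" where
  "setprod A B = {a * b | a b. a \<in> A \<and> b \<in> B}"

end

theory Submission
  imports Defs
begin

text \<open>Write Z for Z_l and H for H_e. Elements of Z are central, Z is closed under products,
  z^n \<in> H for z \<in> Z and n \<ge> l, and an element of Z lying in h X^1 for some h \<in> H lies in H.

  If some b \<in> Z has infinitely many multiples in Z - H, take j maximal such that b^j has;
  the multiples of b^j that are not multiples of b^(j+1) form A, and their products, being
  multiples of b^(2j), lie among the finitely many multiples of b^(j+1) outside H, or in H.

  Otherwise every element of Z has only finitely many multiples in Z - H, and a diagonal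
  argument gives an injective sequence c in Z - H such that c_i c_x and c_i c_y agree up to H
  whenever x, y > i. Among the infinite sets {c_i^(a+1) c_(i+1)^r | i} - H choose one with
  a + r maximal: its pairwise products lie, up to H, in two such sets of larger index, which
  are finite.

  In both cases adding to F some z^l \<in> H makes F X^1 contain H without meeting A.\<close>

lemma spow_Suc: "n \<ge> 1 \<Longrightarrow> spow x (Suc n) = spow x n * x"
  by (cases n) auto

lemma spow_add: "m \<ge> 1 \<Longrightarrow> n \<ge> 1 \<Longrightarrow> spow x (m + n) = spow x m * spow x n"
proof (induction n)
  case (Suc n)
  show ?case
  proof (cases "n = 0")
    case False
    with Suc show ?thesis by (simp add: spow_Suc mult.assoc)
  qed (use Suc.prems in \<open>simp add: spow_Suc\<close>)
qed simp

lemma spow_Suc_left: "n \<ge> 1 \<Longrightarrow> spow x (Suc n) = x * spow x n"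
  using spow_add[of 1 n x] by simp

lemma center_comm: "x \<in> center \<Longrightarrow> x * y = y * x"
  unfolding center_def by auto

lemma center_mult:
  assumes "x \<in> center" "y \<in> center"
  shows "x * y \<in> center"
proof -
  have "x * y * z = z * (x * y)" for z
    using center_comm[OF assms(1)] center_comm[OF assms(2)] by (metis mult.assoc)
  then show ?thesis unfolding center_def by simp
qed

lemma spow_mult_distrib: "x \<in> center \<Longrightarrow> spow (x * y) n = spow x n * spow y n"
proof (induction x n rule: spow.induct)
  case (3 x n)
  then show ?case
    by (simp add: mult.assoc) (metis center_comm mult.assoc)
qed simp_all

lemma funpow_mult_eq_spow: "n \<ge> 1 \<Longrightarrow> ((*) u ^^ n) x = spow u n * x"
proof (induction n)
  case (Suc n)
  then show ?case by (cases "n = 0") (simp_all add: spow_Suc_left mult.assoc)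
qed simp

lemma funpow_mult_self: "((*) x ^^ n) x = spow x (Suc n)"
  by (cases n) (simp_all add: funpow_mult_eq_spow del: funpow.simps(2))

lemma funpow_mult_right: "((*) u ^^ n) x * y = ((*) u ^^ n) (x * y :: 'a::semigroup_mult)"
  by (induction n) (simp_all add: mult.assoc)

lemma funpow_mult_left_commute: "u \<in> center \<Longrightarrow> ((*) u ^^ n) (v * x) = v * ((*) u ^^ n) x"
  by (induction n) (simp_all, metis center_comm mult.assoc)

lemma funpow_mult_commute:
  "u \<in> center \<Longrightarrow> ((*) u ^^ m) (((*) v ^^ n) x) = ((*) v ^^ n) (((*) u ^^ m) x)"
  by (induction n) (simp_all add: funpow_mult_left_commute)

lemma ideal1_singleton: "ideal1 {f} = insert f {f * x | x. True}"
  unfolding ideal1_def by auto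

lemma ideal1_subset: "F \<subseteq> ideal1 F"
  unfolding ideal1_def by blast

lemma ideal1_eq_UN: "ideal1 F = (\<Union>f\<in>F. ideal1 {f})"
  unfolding ideal1_def by auto

lemma ideal1_insert: "ideal1 (insert f F) = ideal1 {f} \<union> ideal1 F"
  unfolding ideal1_def by auto

lemma ideal1_trans: "z \<in> ideal1 {f} \<Longrightarrow> f \<in> ideal1 {g} \<Longrightarrow> z \<in> ideal1 {g}"
  unfolding ideal1_singleton by (auto simp: mult.assoc)

lemma ideal1_mult:
  "u \<in> ideal1 {f} \<Longrightarrow> v \<in> ideal1 {g} \<Longrightarrow> g \<in> center \<Longrightarrow> u * v \<in> ideal1 {f * g}"
  unfolding ideal1_singleton
  by (auto simp: mult.assoc) (metis center_comm, metis center_comm mult.assoc)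

lemma center_mult_ideal1: "u \<in> center \<Longrightarrow> x \<in> ideal1 {f} \<Longrightarrow> u * x \<in> ideal1 {f}"
  unfolding ideal1_singleton by (auto simp: center_comm) (metis center_comm mult.assoc)

lemma funpow_mult_ideal1: "u \<in> center \<Longrightarrow> x \<in> ideal1 {f} \<Longrightarrow> ((*) u ^^ n) x \<in> ideal1 {f}"
  by (induction n) (simp_all add: center_mult_ideal1)

lemma maxgrp_mult: "x \<in> maxgrp e \<Longrightarrow> y \<in> maxgrp e \<Longrightarrow> x * y \<in> maxgrp e"
proof -
  assume "x \<in> maxgrp e" "y \<in> maxgrp e"
  then obtain x' y' where
      x: "e * x = x" "x * e = x" "e * x' = x'" "x' * e = x'" "x * x' = e" "x' * x = e"
    and y: "e * y = y" "y * e = y" "e * y' = y'" "y' * e = y'" "y * y' = e" "y' * y = e"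
    unfolding maxgrp_def by blast
  have "e * (x * y) = x * y" "x * y * e = x * y" "e * (y' * x') = y' * x'" "y' * x' * e = y' * x'"
    "x * y * (y' * x') = e" "y' * x' * (x * y) = e"
    using x y by (metis mult.assoc)+
  then show ?thesis unfolding maxgrp_def by blast
qed

lemma maxgrp_left_unit: "x \<in> maxgrp e \<Longrightarrow> e * x = x"
  unfolding maxgrp_def by blast

lemma maxgrp_subset_ideal1: "h \<in> maxgrp e \<Longrightarrow> maxgrp e \<subseteq> ideal1 {h}"
proof
  fix x assume h: "h \<in> maxgrp e" and x: "x \<in> maxgrp e"
  obtain y where "h * y = e" using h unfolding maxgrp_def by blast
  then have "x = h * (y * x)" using maxgrp_left_unit[OF x] by (simp add: mult.assoc[symmetric])
  then show "x \<in> ideal1 {h}" unfolding ideal1_singleton by blast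
qed

lemma spow_left_unit: "e * z = z \<Longrightarrow> e * spow z n = spow z n"
  by (induction z n rule: spow.induct) (simp_all add: mult.assoc[symmetric])

text \<open>The inverse of z is z^(l-1) times the inverse of z^l.\<close>
lemma central_root_in_maxgrp:
  assumes "z \<in> center" "e * z = z" "l \<ge> 1" "spow z l \<in> maxgrp e"
  shows "z \<in> maxgrp e"
proof (cases "l = 1")
  case False
  then obtain m where m: "l = Suc m" "m \<ge> 1" using assms(3) by (cases l) auto
  obtain y where y: "e * y = y" "y * e = y" "spow z l * y = e"
    using assms(4) unfolding maxgrp_def by blast
  define w where "w = spow z m * y"
  have ze: "z * e = z" using center_comm[OF assms(1)] assms(2) by simp
  have "e * w = w"
    unfolding w_def using assms(2) by (simp add: mult.assoc[symmetric] spow_left_unit)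
  moreover have "w * e = w" unfolding w_def using y by (simp add: mult.assoc)
  moreover have "z * w = e"
    unfolding w_def using y m spow_Suc_left[of m z] by (simp add: mult.assoc)
  moreover have "w * z = e"
    unfolding w_def using y m spow_Suc[of m z] center_comm[OF assms(1), of y] by (metis mult.assoc)
  ultimately show ?thesis using assms(2) ze unfolding maxgrp_def by blast
qed (use assms in simp)

lemma diagonal_sequence:
  assumes "infinite S"
    and refine: "\<And>b T. b \<in> S \<Longrightarrow> T \<subseteq> S \<Longrightarrow> infinite T \<Longrightarrow>
        \<exists>T'\<subseteq>T. infinite T' \<and> (\<forall>x\<in>T'. \<forall>y\<in>T'. R b x y)"
  shows "\<exists>c :: nat \<Rightarrow> 'a. inj c \<and> range c \<subseteq> S \<and> (\<forall>i x y. i < x \<longrightarrow> i < y \<longrightarrow> R (c i) (c x) (c y))"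
proof -
  define pick :: "'a set \<Rightarrow> 'a" where "pick T = (SOME x. x \<in> T)" for T
  define nxt where "nxt T = (SOME T'. T' \<subseteq> T - {pick T} \<and> infinite T' \<and>
      (\<forall>x\<in>T'. \<forall>y\<in>T'. R (pick T) x y))" for T
  have nxt: "pick T \<in> T \<and> nxt T \<subseteq> T - {pick T} \<and> infinite (nxt T) \<and>
      (\<forall>x\<in>nxt T. \<forall>y\<in>nxt T. R (pick T) x y)" if "T \<subseteq> S" "infinite T" for T
  proof -
    have "T \<noteq> {}" using that(2) by auto
    then have pick: "pick T \<in> T" unfolding pick_def by (simp add: some_in_eq)
    with that have "pick T \<in> S" "T - {pick T} \<subseteq> S" "infinite (T - {pick T})" by auto
    then have "\<exists>T'\<subseteq>T - {pick T}. infinite T' \<and> (\<forall>x\<in>T'. \<forall>y\<in>T'. R (pick T) x y)"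
      by (rule refine)
    then have "nxt T \<subseteq> T - {pick T} \<and> infinite (nxt T) \<and> (\<forall>x\<in>nxt T. \<forall>y\<in>nxt T. R (pick T) x y)"
      unfolding nxt_def by (rule someI2_ex) blast
    with pick show ?thesis by blast
  qed
  define St where "St n = (nxt ^^ n) S" for n
  have St: "St n \<subseteq> S \<and> infinite (St n)" for n
  proof (induction n)
    case (Suc n)
    then show ?case using nxt[of "St n"] by (auto simp: St_def)
  qed (simp add: St_def assms(1))
  define c where "c n = pick (St n)" for n
  have St_Suc: "c n \<in> St n \<and> St (Suc n) \<subseteq> St n - {c n}" for n
    using nxt[of "St n"] St[of n] unfolding St_def c_def by simp
  have St_mono: "m \<le> n \<Longrightarrow> St n \<subseteq> St m" for m n
  proof (induction n rule: dec_induct)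
    case (step n)
    then show ?case using St_Suc[of n] by blast
  qed simp
  have later: "c x \<in> St (Suc i) - {c i}" if "i < x" for i x
    using St_mono[of "Suc i" x] that St_Suc[of x] St_Suc[of i] by auto
  have "inj c"
  proof (rule injI)
    fix x y assume "c x = c y"
    then show "x = y"
      using later[of x y] later[of y x] by (metis Diff_iff insertI1 linorder_neqE_nat)
  qed
  moreover have "range c \<subseteq> S" using St_Suc St by blast
  moreover have "R (c i) (c x) (c y)" if "i < x" "i < y" for i x y
  proof -
    have "St (Suc i) = nxt (St i)" by (simp add: St_def)
    then show ?thesis
      using nxt[of "St i"] St[of i] later[OF that(1)] later[OF that(2)] unfolding c_def by blast
  qed
  ultimately show ?thesis by blast
qed

locale central_roots =
  fixes e :: "'a::semigroup_mult" and l :: nat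
  assumes l_pos: "l \<ge> 1"
begin

abbreviation Z :: "'a set" where "Z \<equiv> {z \<in> center. spow z l \<in> maxgrp e}"
abbreviation H :: "'a set" where "H \<equiv> maxgrp e"

lemma Z_mult: "x \<in> Z \<Longrightarrow> y \<in> Z \<Longrightarrow> x * y \<in> Z"
  by (simp add: center_mult maxgrp_mult spow_mult_distrib)

lemma Z_spow: "x \<in> Z \<Longrightarrow> spow x n \<in> Z"
proof (induction x n rule: spow.induct)
  case (3 x n)
  then show ?case using Z_mult[of "spow x (Suc n)" x] by simp
qed simp_all

lemma Z_funpow: "u \<in> Z \<Longrightarrow> x \<in> Z \<Longrightarrow> ((*) u ^^ n) x \<in> Z"
  by (induction n) (use Z_mult in auto)

lemma Z_in_H_if_in_ideal1:
  assumes "z \<in> Z" "h \<in> H" "z \<in> ideal1 {h}"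
  shows "z \<in> H"
proof -
  have "e * z = z"
    using assms(3) maxgrp_left_unit[OF assms(2)] unfolding ideal1_singleton
    by (auto simp: mult.assoc[symmetric])
  then show ?thesis using central_root_in_maxgrp l_pos assms(1) by blast
qed

lemma Z_mult_H: "x \<in> Z \<Longrightarrow> h \<in> Z \<Longrightarrow> h \<in> H \<Longrightarrow> x * h \<in> H"
  using Z_in_H_if_in_ideal1[of "x * h" h] Z_mult center_comm[of x h]
  unfolding ideal1_singleton by auto

lemma spow_in_H: assumes "x \<in> Z" "n \<ge> l" shows "spow x n \<in> H"
proof (cases "n = l")
  case False
  then have "spow x n = spow x (n - l) * spow x l"
    using spow_add[of "n - l" l x] l_pos assms(2) by (simp add: add.commute)
  then show ?thesis using Z_mult_H assms Z_spow by simp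
qed (use assms in simp)

lemma funpow_in_H:
  assumes "u \<in> Z" "x \<in> Z" "n \<ge> l"
  shows "((*) u ^^ n) x \<in> H"
proof -
  have "((*) u ^^ n) x = x * spow u n"
    using funpow_mult_eq_spow[of n u x] l_pos assms(2,3) center_comm[of x] by simp
  then show ?thesis
    using Z_mult_H[OF assms(2) Z_spow[OF assms(1)] spow_in_H[OF assms(1,3)]] by simp
qed

lemma funpow_preserves_H:
  assumes "u \<in> Z" "x \<in> Z" "x \<in> H"
  shows "((*) u ^^ n) x \<in> H"
proof (induction n)
  case (Suc n)
  then show ?case using Z_mult_H[OF assms(1) Z_funpow[OF assms(1,2)]] by simp
qed (simp add: assms(3))

definition outer_multiples :: "'a \<Rightarrow> 'a set" where
  "outer_multiples b = {z \<in> Z. z \<notin> H \<and> z \<in> ideal1 {b}}"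

definition absorbing_pair :: "'a set \<Rightarrow> 'a set \<Rightarrow> bool" where
  "absorbing_pair F A \<longleftrightarrow> finite F \<and> F \<subseteq> Z \<and> infinite A \<and> A \<subseteq> Z - ideal1 F
      \<and> setprod A A \<subseteq> F \<union> H \<and> F \<union> H \<subseteq> ideal1 F"

lemma absorbing_pair_of_finite_overlap:
  assumes A: "A \<subseteq> Z - H" "infinite A" and F: "finite F" "F \<subseteq> Z"
    and prod: "setprod A A \<subseteq> F \<union> H" and overlap: "finite (A \<inter> ideal1 F)"
  shows "\<exists>F A. absorbing_pair F A"
proof -
  obtain z where "z \<in> Z" using A infinite_imp_nonempty by blast
  define f where "f = spow z l"
  have "f \<in> Z" "f \<in> H" using Z_spow[OF \<open>z \<in> Z\<close>] \<open>z \<in> Z\<close> unfolding f_def by auto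
  then have f: "f \<in> Z" "f \<in> H" "H \<subseteq> ideal1 {f}" using maxgrp_subset_ideal1 by auto
  define A' where "A' = A - ideal1 F"
  have "A' = A - (A \<inter> ideal1 F)" unfolding A'_def by blast
  then have "infinite A'" using Diff_infinite_finite[OF overlap A(2)] by simp
  moreover have "A' \<subseteq> Z - ideal1 (insert f F)"
  proof
    fix a assume "a \<in> A'"
    then have "a \<in> Z" "a \<notin> H" "a \<notin> ideal1 F" using A(1) unfolding A'_def by auto
    then show "a \<in> Z - ideal1 (insert f F)"
      using Z_in_H_if_in_ideal1[of a f] f(2) ideal1_insert[of f F] by blast
  qed
  moreover have "setprod A' A' \<subseteq> insert f F \<union> H"
    using prod unfolding A'_def setprod_def by blast
  moreover have "insert f F \<union> H \<subseteq> ideal1 (insert f F)"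
    using f ideal1_insert[of f F] ideal1_subset[of "insert f F"] by blast
  ultimately have "absorbing_pair (insert f F) A'"
    using F f(1) unfolding absorbing_pair_def by simp
  then show ?thesis by blast
qed

lemma outer_multiples_spow_empty: "b \<in> Z \<Longrightarrow> n \<ge> l \<Longrightarrow> outer_multiples (spow b n) = {}"
  unfolding outer_multiples_def using Z_in_H_if_in_ideal1 spow_in_H by blast

lemma outer_multiples_mult:
  assumes "b \<in> Z" "j \<ge> 1" "u \<in> outer_multiples (spow b j)" "v \<in> outer_multiples (spow b j)"
  shows "u * v \<in> outer_multiples (spow b (Suc j)) \<union> H"
proof -
  have "u * v \<in> ideal1 {spow b j * spow b j}"
    using assms ideal1_mult Z_spow unfolding outer_multiples_def by blast
  moreover have "spow b j * spow b j \<in> ideal1 {spow b (Suc j)}"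
  proof (cases "j = 1")
    case False
    then have "spow b j * spow b j = spow b (Suc j) * spow b (j - 1)"
      using spow_add[of j j b] spow_add[of "Suc j" "j - 1" b] assms(2) by simp
    then show ?thesis unfolding ideal1_singleton by blast
  qed (simp add: ideal1_singleton)
  moreover have "u * v \<in> Z" using assms Z_mult unfolding outer_multiples_def by blast
  ultimately show ?thesis unfolding outer_multiples_def using ideal1_trans by blast
qed

lemma absorbing_pair_if_infinite_outer_multiples:
  assumes b: "b \<in> Z" "infinite (outer_multiples b)"
  shows "\<exists>F A. absorbing_pair F A"
proof -
  define P where "P j \<longleftrightarrow> j \<ge> 1 \<and> infinite (outer_multiples (spow b j))" for j
  have "P j \<Longrightarrow> j < l" for j
    using outer_multiples_spow_empty[OF b(1), of j] unfolding P_def by fastforce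
  moreover have "P 1" using b unfolding P_def by simp
  ultimately obtain j where j: "P j" and max: "\<And>k. P k \<Longrightarrow> k \<le> j"
    using ex_has_greatest_nat[of P 1 "\<lambda>j. j" l] by blast
  have "\<not> P (Suc j)" using max[of "Suc j"] by linarith
  then have j1: "j \<ge> 1" and fin: "finite (outer_multiples (spow b (Suc j)))"
    using j unfolding P_def by auto
  define F where "F = outer_multiples (spow b (Suc j))"
  define A where "A = outer_multiples (spow b j) - F"
  have "A \<subseteq> Z - H" unfolding A_def outer_multiples_def by blast
  moreover have "infinite A" using j(1) fin unfolding A_def F_def P_def by simp
  moreover have "F \<subseteq> Z" unfolding F_def outer_multiples_def by blast
  moreover have "setprod A A \<subseteq> F \<union> H"
    using outer_multiples_mult[OF b(1) j1] unfolding setprod_def A_def F_def by blast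
  moreover have "A \<inter> ideal1 F = {}"
  proof -
    have "a \<in> F" if a: "a \<in> outer_multiples (spow b j)" "a \<in> ideal1 F" for a
    proof -
      obtain g where "g \<in> F" "a \<in> ideal1 {g}" using a(2) ideal1_eq_UN[of F] by blast
      then have "a \<in> ideal1 {spow b (Suc j)}"
        using ideal1_trans unfolding F_def outer_multiples_def by blast
      then show ?thesis using a(1) unfolding F_def outer_multiples_def by blast
    qed
    then show ?thesis unfolding A_def by blast
  qed
  ultimately show ?thesis
    using absorbing_pair_of_finite_overlap fin unfolding F_def by simp
qed

definition eq_mod_H :: "'a \<Rightarrow> 'a \<Rightarrow> bool" where
  "eq_mod_H x y \<longleftrightarrow> x = y \<or> x \<in> H \<and> y \<in> H"

lemma eq_mod_H_trans [trans]: "eq_mod_H x y \<Longrightarrow> eq_mod_H y z \<Longrightarrow> eq_mod_H x z"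
  unfolding eq_mod_H_def by auto

lemma eq_mod_H_mult_right:
  assumes "eq_mod_H u v" "u * y \<in> Z" "v * y \<in> Z"
  shows "eq_mod_H (u * y) (v * y)"
  using assms Z_in_H_if_in_ideal1[of "u * y" u] Z_in_H_if_in_ideal1[of "v * y" v]
  unfolding eq_mod_H_def ideal1_singleton by blast

lemma eq_mod_H_mult_left:
  "eq_mod_H u v \<Longrightarrow> w \<in> center \<Longrightarrow> w * u \<in> Z \<Longrightarrow> w * v \<in> Z \<Longrightarrow> eq_mod_H (w * u) (w * v)"
  using eq_mod_H_mult_right[of u v w] center_comm[of w] by simp

lemma eq_mod_H_funpow:
  assumes "eq_mod_H x y" "w \<in> Z" "x \<in> Z" "y \<in> Z"
  shows "eq_mod_H (((*) w ^^ n) x) (((*) w ^^ n) y)"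
proof (induction n)
  case (Suc n)
  have "w \<in> center" using assms(2) by blast
  then show ?case
    using eq_mod_H_mult_left[OF Suc.IH] Z_mult[OF assms(2) Z_funpow[OF assms(2,3)]]
      Z_mult[OF assms(2) Z_funpow[OF assms(2,4)]] by simp
qed (simp add: assms(1))

lemma infinite_subset_eq_mod_H:
  assumes b: "b \<in> Z" "finite (outer_multiples b)" and T: "T \<subseteq> Z" "infinite T"
  shows "\<exists>T'\<subseteq>T. infinite T' \<and> (\<forall>x\<in>T'. \<forall>y\<in>T'. eq_mod_H (b * x) (b * y))"
proof (cases "finite {x \<in> T. b * x \<in> H}")
  case True
  define T' where "T' = {x \<in> T. b * x \<notin> H}"
  have "T = {x \<in> T. b * x \<in> H} \<union> T'" unfolding T'_def by blast
  then have "infinite T'" using True T(2) by (metis finite_Un)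
  moreover have "(*) b ` T' \<subseteq> outer_multiples b"
    using b(1) T(1) Z_mult unfolding T'_def outer_multiples_def ideal1_singleton by auto
  then have "finite ((*) b ` T')" using b(2) finite_subset by blast
  ultimately obtain x where "infinite {y \<in> T'. b * y = b * x}"
    using pigeonhole_infinite by blast
  then show ?thesis
    by (intro exI[of _ "{y \<in> T'. b * y = b * x}"]) (auto simp: T'_def eq_mod_H_def)
next
  case False
  then show ?thesis
    by (intro exI[of _ "{x \<in> T. b * x \<in> H}"]) (auto simp: eq_mod_H_def)
qed

end

locale stable_sequence = central_roots +
  fixes c :: "nat \<Rightarrow> 'a"
  assumes c_in: "c n \<in> Z - H" and inj_c: "inj c"
    and stable: "i < x \<Longrightarrow> i < y \<Longrightarrow> eq_mod_H (c i * c x) (c i * c y)"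
begin

lemma c_Z: "c n \<in> Z"
  using c_in by blast

lemma c_center: "c n \<in> center"
  using c_in by blast

text \<open>word i a r = c_i^(a+1) c_(i+1)^r.\<close>
definition word :: "nat \<Rightarrow> nat \<Rightarrow> nat \<Rightarrow> 'a" where
  "word i a r = ((*) (c (Suc i)) ^^ r) (((*) (c i) ^^ a) (c i))"

lemma word_Z: "word i a r \<in> Z"
  unfolding word_def using Z_funpow c_Z by blast

lemma word_ideal1: "word i a r \<in> ideal1 {c i}"
  unfolding word_def by (intro funpow_mult_ideal1 c_center) (simp_all add: ideal1_def)

lemma eq_mod_H_shift:
  assumes "i < j" "x \<in> Z" "x \<in> ideal1 {c i}"
  shows "eq_mod_H (c j * x) (c (Suc i) * x)"
proof -
  have ij: "eq_mod_H (c i * c j) (c i * c (Suc i))"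
    using stable[OF assms(1), of "Suc i"] assms(1) by simp
  consider "x = c i" | y where "x = c i * y"
    using assms(3) unfolding ideal1_singleton by blast
  then show ?thesis
  proof cases
    case 1
    then show ?thesis using ij center_comm[OF c_center, of i] by simp
  next
    case 2
    then have eqs: "c j * x = c i * c j * y" "c (Suc i) * x = c i * c (Suc i) * y"
      using center_comm[OF c_center] by (metis mult.assoc)+
    have "c j * x \<in> Z" "c (Suc i) * x \<in> Z" using Z_mult[OF c_Z assms(2)] by blast+
    then show ?thesis unfolding eqs by (rule eq_mod_H_mult_right[OF ij])
  qed
qed

lemma eq_mod_H_absorb:
  assumes "i < j" "x \<in> Z" "x \<in> ideal1 {c i}"
  shows "eq_mod_H (((*) (c j) ^^ n) x) (((*) (c (Suc i)) ^^ n) x)"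
proof (induction n)
  case (Suc n)
  let ?x = "((*) (c (Suc i)) ^^ n) x"
  have x: "?x \<in> Z" "?x \<in> ideal1 {c i}"
    using Z_funpow[OF c_Z assms(2)] funpow_mult_ideal1[OF c_center assms(3)] by blast+
  have "((*) (c j) ^^ Suc n) x = c j * ((*) (c j) ^^ n) x" by simp
  also have "eq_mod_H \<dots> (c j * ?x)"
    by (rule eq_mod_H_mult_left[OF Suc.IH c_center Z_mult[OF c_Z Z_funpow[OF c_Z assms(2)]]
          Z_mult[OF c_Z x(1)]])
  also have "eq_mod_H \<dots> (c (Suc i) * ?x)"
    by (rule eq_mod_H_shift[OF assms(1) x])
  finally show ?case by simp
qed (simp add: eq_mod_H_def)

lemma word_funpow: "((*) (c (Suc i)) ^^ m) (word i a r) = word i a (m + r)"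
  unfolding word_def by (simp add: funpow_add)

lemma word_square: "word i a r * word i a r = word i (2 * a + 1) (2 * r)"
proof -
  let ?w = "word i a r"
  have "?w * ?w = ((*) (c (Suc i)) ^^ r) (((*) (c i) ^^ Suc a) ?w)"
    by (subst (1) word_def) (simp only: funpow_mult_right funpow_Suc_right comp_apply)
  also have "\<dots> = ((*) (c (Suc i)) ^^ r) (((*) (c (Suc i)) ^^ r)
      (((*) (c i) ^^ Suc a) (((*) (c i) ^^ a) (c i))))"
    unfolding word_def
    using funpow_mult_commute[OF c_center[of i], where m = "Suc a" and v = "c (Suc i)" and n = r]
    by simp
  also have "\<dots> = word i (2 * a + 1) (2 * r)"
    unfolding word_def by (simp add: mult_2 funpow_add)
  finally show ?thesis .
qed

lemma word_mult:
  assumes "i < k"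
  shows "eq_mod_H (word i a r * word k b s) (word i a (s + Suc b + r))"
proof -
  let ?w = "((*) (c k) ^^ Suc b) (word i a r)"
  have w: "?w \<in> Z" "?w \<in> ideal1 {c i}"
    using Z_funpow[OF c_Z word_Z] funpow_mult_ideal1[OF c_center word_ideal1] by blast+
  have "word i a r * word k b s = word k b s * word i a r"
    using center_comm word_Z by blast
  also have "\<dots> = ((*) (c (Suc k)) ^^ s) ?w"
    unfolding word_def[of k] by (simp only: funpow_mult_right funpow_Suc_right comp_apply)
  also have "eq_mod_H \<dots> (((*) (c (Suc i)) ^^ s) ?w)"
    using eq_mod_H_absorb[of i "Suc k", OF _ w] assms by simp
  also have "eq_mod_H \<dots> (((*) (c (Suc i)) ^^ s) (((*) (c (Suc i)) ^^ Suc b) (word i a r)))"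
    by (rule eq_mod_H_funpow[OF eq_mod_H_absorb[OF assms word_Z word_ideal1] c_Z w(1)
          Z_funpow[OF c_Z word_Z]])
  also have "\<dots> = word i a (s + Suc b + r)"
    using word_funpow[where i = i and m = "s + Suc b"] by (simp only: funpow_add comp_apply)
  finally show ?thesis .
qed

lemma word_in_H:
  assumes "Suc a \<ge> l \<or> r \<ge> l"
  shows "word i a r \<in> H"
  using assms
proof
  assume "Suc a \<ge> l"
  then show ?thesis
    using funpow_preserves_H[OF c_Z Z_spow[OF c_Z] spow_in_H[OF c_Z]]
    unfolding word_def funpow_mult_self by blast
next
  assume "r \<ge> l"
  then show ?thesis
    using funpow_in_H[OF c_Z Z_funpow[OF c_Z c_Z]] unfolding word_def by blast
qed

definition layer :: "nat \<Rightarrow> nat \<Rightarrow> 'a set" where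
  "layer a r = range (\<lambda>i. word i a r) - H"

lemma exists_infinite_set_with_finite_products:
  "\<exists>A. A \<subseteq> Z - H \<and> infinite A \<and> finite (setprod A A - H)"
proof -
  define P where "P p \<longleftrightarrow> infinite (layer (fst p) (snd p))" for p
  have "layer 0 0 = range c"
    unfolding layer_def word_def using c_in by auto
  then have "P (0, 0)"
    unfolding P_def using finite_imageD[OF _ inj_c] infinite_UNIV_nat by auto
  moreover have "fst p + snd p < 2 * l" if "P p" for p
  proof -
    have "\<not> (Suc (fst p) \<ge> l \<or> snd p \<ge> l)"
    proof
      assume "Suc (fst p) \<ge> l \<or> snd p \<ge> l"
      then have "layer (fst p) (snd p) = {}" unfolding layer_def using word_in_H by blast
      then show False using that unfolding P_def by simp
    qed
    then show ?thesis by linarith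
  qed
  ultimately obtain p where p: "P p" and max: "\<And>q. P q \<Longrightarrow> fst q + snd q \<le> fst p + snd p"
    using ex_has_greatest_nat[of P "(0, 0)" "\<lambda>p. fst p + snd p" "2 * l"] by blast
  obtain a r where [simp]: "p = (a, r)" by fastforce
  define A where "A = layer a r"
  have "setprod A A - H \<subseteq> layer a (r + Suc a + r) \<union> layer (2 * a + 1) (2 * r)"
  proof
    fix z assume "z \<in> setprod A A - H"
    then obtain i k where z: "z = word i a r * word k a r" "z \<notin> H"
      unfolding setprod_def A_def layer_def by blast
    have comm: "z = word k a r * word i a r"
      using z(1) center_comm word_Z by blast
    consider "i < k" | "k < i" | "i = k" by linarith
    then have "z \<in> range (\<lambda>i. word i a (r + Suc a + r)) \<union> range (\<lambda>i. word i (2 * a + 1) (2 * r))"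
    proof cases
      case 1
      then show ?thesis using word_mult[OF 1, of a r a r] z unfolding eq_mod_H_def by auto
    next
      case 2
      then show ?thesis using word_mult[OF 2, of a r a r] z(2) comm unfolding eq_mod_H_def by auto
    next
      case 3
      then show ?thesis using word_square[of i a r] z(1) by auto
    qed
    then show "z \<in> layer a (r + Suc a + r) \<union> layer (2 * a + 1) (2 * r)"
      using z(2) unfolding layer_def by blast
  qed
  moreover have "finite (layer a (r + Suc a + r))" "finite (layer (2 * a + 1) (2 * r))"
    using max[of "(a, r + Suc a + r)"] max[of "(2 * a + 1, 2 * r)"] unfolding P_def by auto
  moreover have "A \<subseteq> Z - H" "infinite A"
    using p word_Z unfolding A_def layer_def P_def by auto
  ultimately show ?thesis using finite_subset by (metis finite_Un)
qed

end

context central_roots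
begin

lemma absorbing_pair_if_finite_outer_multiples:
  assumes fin: "\<And>b. b \<in> Z \<Longrightarrow> finite (outer_multiples b)" and inf: "infinite (Z - H)"
  shows "\<exists>F A. absorbing_pair F A"
proof -
  have "\<exists>T'\<subseteq>T. infinite T' \<and> (\<forall>x\<in>T'. \<forall>y\<in>T'. eq_mod_H (b * x) (b * y))"
    if "b \<in> Z - H" "T \<subseteq> Z - H" "infinite T" for b T
    using infinite_subset_eq_mod_H[of b T] fin that by blast
  then obtain c :: "nat \<Rightarrow> 'a" where c: "inj c" "range c \<subseteq> Z - H"
      "\<forall>i x y. i < x \<longrightarrow> i < y \<longrightarrow> eq_mod_H (c i * c x) (c i * c y)"
    using diagonal_sequence[OF inf, of "\<lambda>b x y. eq_mod_H (b * x) (b * y)"] by blast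
  interpret stable_sequence e l c
    using c by unfold_locales blast+
  obtain A where A: "A \<subseteq> Z - H" "infinite A" "finite (setprod A A - H)"
    using exists_infinite_set_with_finite_products by blast
  define F where "F = setprod A A - H"
  have "finite F" "setprod A A \<subseteq> F \<union> H" using A(3) unfolding F_def by auto
  have "F \<subseteq> Z" unfolding F_def setprod_def using A(1) Z_mult by blast
  have "A \<inter> ideal1 F \<subseteq> (\<Union>f\<in>F. outer_multiples f)"
    using A(1) ideal1_eq_UN[of F] unfolding outer_multiples_def by blast
  moreover have "finite (\<Union>f\<in>F. outer_multiples f)"
    using fin \<open>F \<subseteq> Z\<close> \<open>finite F\<close> by auto
  ultimately show ?thesis
    using absorbing_pair_of_finite_overlap[OF A(1,2) \<open>finite F\<close> \<open>F \<subseteq> Z\<close>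
        \<open>setprod A A \<subseteq> F \<union> H\<close>] finite_subset by blast
qed

end

theorem lemma7p1:
  fixes e :: "'a::semigroup_mult" and l :: nat
  assumes "periodic_sg TYPE('a)"
    and "e \<in> idems"
    and "l \<ge> 1"
    and "infinite ({z \<in> center. spow z l \<in> maxgrp e} - maxgrp e)"
  shows "\<exists>F A. finite F \<and> F \<subseteq> {z \<in> center. spow z l \<in> maxgrp e}
      \<and> infinite A \<and> A \<subseteq> {z \<in> center. spow z l \<in> maxgrp e} - ideal1 F
      \<and> setprod A A \<subseteq> F \<union> maxgrp e \<and> F \<union> maxgrp e \<subseteq> ideal1 F"
proof -
  interpret central_roots e l
    using assms(3) by unfold_locales
  have "\<exists>F A. absorbing_pair F A"
    using absorbing_pair_if_infinite_outer_multiples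
      absorbing_pair_if_finite_outer_multiples[OF _ assms(4)] by blast
  then show ?thesis
    unfolding absorbing_pair_def by blast
qed

end
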